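(* Let $f_1,f_2:\mathbb{R}^n\to[-\infty,\infty]$ be proper nearly convex functions with $\operatorname{ri}(\operatorname{dom} f_1)\cap\operatorname{ri}(\operatorname{dom} f_2)\neq\emptyset$. Then $(f_1+f_2)^*(w)=(f_1^*\square f_2^* )(w)$ for all $w\in\mathbb{R}^n$. Moreover, if $(f_1+f_2)^*(w)\in\mathbb{R}$, there exist $w_1,w_2\in\mathbb{R}^n$ with $w=w_1+w_2$ and $(f_1+f_2)^*(w)=f_1^*(w_1)+f_2^*(w_2)$.
   Context: A set $\Omega$ is nearly convex if there is a convex set $C$ with $C\subset\Omega\subset\overline{C}$; $\operatorname{ri}\Omega=\{a\in\Omega:\exists\delta>0,\ B(a;\delta)\cap\operatorname{aff}\Omega\subset\Omega\}$. A function $f$ is nearly convex if $\operatorname{epi}f=\{(x,\lambda):f(x)\le\lambda\}$ is nearly convex, proper if $\operatorname{dom}f=\{f<\infty\}\neq\emptyset$ and $f>-\infty$. Fenchel conjugate: $f^*(w)=\sup_x\{\langle w,x\rangle-f(x)\}$. Infimal convolution: $(g\square h)(w)=\inf\{g(w_1)+h(w_2):w_1+w_2=w\}$. *)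

theory Defs
  imports "HOL-Analysis.Analysis" "HOL-Library.Extended_Real"
begin

definition nearly_convex_set :: "'a::real_normed_vector set \<Rightarrow> bool" where
  "nearly_convex_set \<Omega> \<longleftrightarrow> (\<exists>C. convex C \<and> C \<subseteq> \<Omega> \<and> \<Omega> \<subseteq> closure C)"

definition ri :: "'a::real_normed_vector set \<Rightarrow> 'a set" where
  "ri \<Omega> = {a \<in> \<Omega>. \<exists>\<delta>>0. ball a \<delta> \<inter> affine hull \<Omega> \<subseteq> \<Omega>}"

definition epi :: "('a \<Rightarrow> ereal) \<Rightarrow> ('a \<times> real) set" where
  "epi f = {(x, t). f x \<le> ereal t}"

definition edom :: "('a \<Rightarrow> ereal) \<Rightarrow> 'a set" where
  "edom f = {x. f x < \<infinity>}"

definition nearly_convex_fun :: "('a::real_normed_vector \<Rightarrow> ereal) \<Rightarrow> bool" where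
  "nearly_convex_fun f \<longleftrightarrow> nearly_convex_set (epi f)"

definition proper_fun :: "('a \<Rightarrow> ereal) \<Rightarrow> bool" where
  "proper_fun f \<longleftrightarrow> edom f \<noteq> {} \<and> (\<forall>x. f x \<noteq> -\<infinity>)"

definition fconj :: "('a::real_inner \<Rightarrow> ereal) \<Rightarrow> 'a \<Rightarrow> ereal" where
  "fconj f w = (SUP x. ereal (w \<bullet> x) - f x)"

definition infconv :: "('a::ab_group_add \<Rightarrow> ereal) \<Rightarrow> ('a \<Rightarrow> ereal) \<Rightarrow> 'a \<Rightarrow> ereal" where
  "infconv g h w = (INF p \<in> {(w1, w2). w1 + w2 = w}. g (fst p) + h (snd p))"

end

theory Submission
  imports Defs
begin

text \<open>The inequality \<open>(f\<^sub>1 + f\<^sub>2)\<^sup>* \<le> f\<^sub>1\<^sup>* \<box> f\<^sub>2\<^sup>*\<close> is elementary. For the converse,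
fix \<open>w\<close> with \<open>(f\<^sub>1 + f\<^sub>2)\<^sup>*(w) = \<alpha>\<close> finite and couple the two epigraphs into
\<open>K = {(x - y, s + r - \<langle>w, x\<rangle>) : (x, s) \<in> epi f\<^sub>1, (y, r) \<in> epi f\<^sub>2}\<close>.
This set is nearly convex, its vertical slice over \<open>0\<close> lies above \<open>-\<alpha>\<close>, and its projection
\<open>dom f\<^sub>1 - dom f\<^sub>2\<close> is absorbing around \<open>0\<close> in its own span because the relative interiors of
the domains meet. Separating \<open>K\<close> from the downward ray below \<open>(0, -\<alpha>)\<close> therefore yields a
non-vertical hyperplane \<open>t \<ge> \<langle>v, z\<rangle> - \<alpha>\<close> below \<open>K\<close>, which says precisely that
\<open>f\<^sub>1\<^sup>*(w + v) + f\<^sub>2\<^sup>*(-v) \<le> \<alpha>\<close>.\<close>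

section \<open>Conjugate functions\<close>

lemma fconj_ge_epi:
  assumes "f x \<le> ereal s"
  shows "ereal (w \<bullet> x - s) \<le> fconj f w"
proof -
  have "ereal (w \<bullet> x - s) \<le> ereal (w \<bullet> x) - f x"
    using ereal_minus_mono[OF order_refl[of "ereal (w \<bullet> x)"] assms] by simp
  also have "\<dots> \<le> fconj f w"
    unfolding fconj_def by (rule SUP_upper) simp
  finally show ?thesis .
qed

lemma fconj_neq_MInf:
  assumes "f x < \<infinity>"
  shows "fconj f w \<noteq> -\<infinity>"
proof -
  obtain s where "f x \<le> ereal s" using assms by (cases "f x") auto
  then show ?thesis using fconj_ge_epi[of f x s w] by auto
qed

lemma fconj_le:
  assumes "\<And>x. f x \<noteq> -\<infinity>" and "\<And>x a. f x = ereal a \<Longrightarrow> w \<bullet> x - a \<le> M"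
  shows "fconj f w \<le> ereal M"
  unfolding fconj_def
proof (rule SUP_least)
  fix x
  show "ereal (w \<bullet> x) - f x \<le> ereal M"
    using assms by (cases "f x") auto
qed

lemma proper_fun_finite_value:
  assumes "proper_fun f" and "x \<in> edom f"
  obtains a where "f x = ereal a"
  using assms unfolding proper_fun_def edom_def by (cases "f x") auto

lemma fconj_add_le:
  assumes "\<And>x. f x \<noteq> -\<infinity>" and "\<And>x. g x \<noteq> -\<infinity>" and "w = w1 + w2"
  shows "fconj (\<lambda>x. f x + g x) w \<le> fconj f w1 + fconj g w2"
  unfolding fconj_def[of "\<lambda>x. f x + g x"]
proof (rule SUP_least)
  fix x
  show "ereal (w \<bullet> x) - (f x + g x) \<le> fconj f w1 + fconj g w2"
  proof (cases "f x = \<infinity> \<or> g x = \<infinity>")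
    case True
    then have "f x + g x = \<infinity>" using assms(1,2)[of x] by auto
    then show ?thesis by (simp only:) simp
  next
    case False
    then obtain a b where a: "f x = ereal a" and b: "g x = ereal b"
      using assms(1,2)[of x] by (cases "f x"; cases "g x") auto
    have "ereal (w \<bullet> x) - (f x + g x) = ereal (w1 \<bullet> x - a) + ereal (w2 \<bullet> x - b)"
      using a b assms(3) by (simp add: inner_add_left)
    also have "\<dots> \<le> fconj f w1 + fconj g w2"
      using a b by (intro add_mono fconj_ge_epi) auto
    finally show ?thesis .
  qed
qed

lemma fconj_add_le_infconv:
  assumes "\<And>x. f x \<noteq> -\<infinity>" and "\<And>x. g x \<noteq> -\<infinity>"
  shows "fconj (\<lambda>x. f x + g x) w \<le> infconv (fconj f) (fconj g) w"
  unfolding infconv_def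
proof (rule INF_greatest)
  fix p assume "p \<in> {(w1, w2). w1 + w2 = w}"
  then show "fconj (\<lambda>x. f x + g x) w \<le> fconj f (fst p) + fconj g (snd p)"
    using fconj_add_le[OF assms, of w "fst p" "snd p"] by auto
qed

lemma fconj_add_fconj_le:
  assumes "proper_fun f" and "proper_fun g"
    and bound: "\<And>x y a b. f x = ereal a \<Longrightarrow> g y = ereal b \<Longrightarrow> u \<bullet> x - a + u' \<bullet> y - b \<le> \<alpha>"
  shows "fconj f u + fconj g u' \<le> ereal \<alpha>"
proof -
  have f: "\<And>x. f x \<noteq> -\<infinity>" and g: "\<And>y. g y \<noteq> -\<infinity>"
    using assms(1,2) unfolding proper_fun_def by auto
  have g_bound: "fconj g u' \<le> ereal (\<alpha> - (u \<bullet> x - a))" if "f x = ereal a" for x a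
    using bound[OF that] by (intro fconj_le g) (simp add: algebra_simps)
  obtain x0 y0 where "x0 \<in> edom f" "y0 \<in> edom g"
    using assms(1,2) unfolding proper_fun_def by blast
  obtain a0 b0 where a0: "f x0 = ereal a0" and b0: "g y0 = ereal b0"
    by (metis proper_fun_finite_value assms(1,2) \<open>x0 \<in> edom f\<close> \<open>y0 \<in> edom g\<close>)
  have "ereal (u' \<bullet> y0 - b0) \<le> fconj g u'"
    using b0 by (intro fconj_ge_epi) simp
  with g_bound[OF a0] obtain \<beta> where \<beta>: "fconj g u' = ereal \<beta>"
    by (cases "fconj g u'") auto
  have f_bound: "fconj f u \<le> ereal (\<alpha> - \<beta>)"
  proof (rule fconj_le[OF f])
    fix x a assume "f x = ereal a"
    then show "u \<bullet> x - a \<le> \<alpha> - \<beta>" using g_bound[of x a] \<beta> by simp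
  qed
  show ?thesis using add_right_mono[OF f_bound, of "ereal \<beta>"] \<beta> by simp
qed

section \<open>Relative interiors and nearly convex sets\<close>

lemma ri_extension_mem:
  fixes D :: "'a::real_normed_vector set"
  assumes x0: "x0 \<in> ri D" and x: "x \<in> D"
  obtains \<epsilon> where "\<epsilon> > 0" and "\<And>e. 0 < e \<Longrightarrow> e \<le> \<epsilon> \<Longrightarrow> x0 + e *\<^sub>R (x0 - x) \<in> D"
proof -
  obtain \<delta> where \<delta>: "\<delta> > 0" "ball x0 \<delta> \<inter> affine hull D \<subseteq> D" and x0D: "x0 \<in> D"
    using x0 unfolding ri_def by auto
  have n: "norm (x0 - x) + 1 > 0" by (simp add: add_nonneg_pos)
  define \<epsilon> where "\<epsilon> = \<delta> / (norm (x0 - x) + 1)"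
  have "\<epsilon> > 0" unfolding \<epsilon>_def using \<delta> n by simp
  moreover have "x0 + e *\<^sub>R (x0 - x) \<in> D" if e: "0 < e" "e \<le> \<epsilon>" for e
  proof -
    have "e * norm (x0 - x) \<le> \<epsilon> * norm (x0 - x)" using e by (simp add: mult_right_mono)
    also have "\<dots> < \<epsilon> * (norm (x0 - x) + 1)" using \<open>\<epsilon> > 0\<close> by simp
    also have "\<dots> = \<delta>" unfolding \<epsilon>_def using n by simp
    finally have "x0 + e *\<^sub>R (x0 - x) \<in> ball x0 \<delta>" using e by (simp add: dist_norm)
    moreover have "x0 + e *\<^sub>R (x0 - x) \<in> affine hull D"
      by (intro mem_affine_3_minus affine_affine_hull hull_inc x0D x)
    ultimately show ?thesis using \<delta> by auto
  qed
  ultimately show thesis by (rule that)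
qed

lemma ri_inter_diff_absorbing:
  fixes A B :: "'a::real_normed_vector set"
  assumes "x0 \<in> ri A" and "x0 \<in> ri B" and "z \<in> {x - y |x y. x \<in> A \<and> y \<in> B}"
  shows "\<exists>e>0. (- e) *\<^sub>R z \<in> {x - y |x y. x \<in> A \<and> y \<in> B}"
proof -
  obtain x y where xy: "x \<in> A" "y \<in> B" "z = x - y" using assms(3) by blast
  obtain e1 where e1: "e1 > 0" "\<And>e. 0 < e \<Longrightarrow> e \<le> e1 \<Longrightarrow> x0 + e *\<^sub>R (x0 - x) \<in> A"
    using ri_extension_mem[OF assms(1) xy(1)] by blast
  obtain e2 where e2: "e2 > 0" "\<And>e. 0 < e \<Longrightarrow> e \<le> e2 \<Longrightarrow> x0 + e *\<^sub>R (x0 - y) \<in> B"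
    using ri_extension_mem[OF assms(2) xy(2)] by blast
  define e where "e = min e1 e2"
  have "e > 0" using e1 e2 unfolding e_def by simp
  have "(- e) *\<^sub>R z = (x0 + e *\<^sub>R (x0 - x)) - (x0 + e *\<^sub>R (x0 - y))"
    unfolding xy(3) by (simp add: algebra_simps)
  moreover have "x0 + e *\<^sub>R (x0 - x) \<in> A" "x0 + e *\<^sub>R (x0 - y) \<in> B"
    using e1 e2 \<open>e > 0\<close> unfolding e_def by auto
  ultimately show ?thesis using \<open>e > 0\<close> by blast
qed

lemma nearly_convex_set_Times:
  assumes "nearly_convex_set A" and "nearly_convex_set B"
  shows "nearly_convex_set (A \<times> B)"
proof -
  obtain C D where "convex C" "C \<subseteq> A" "A \<subseteq> closure C" "convex D" "D \<subseteq> B" "B \<subseteq> closure D"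
    using assms unfolding nearly_convex_set_def by blast
  then show ?thesis unfolding nearly_convex_set_def
    by (intro exI[of _ "C \<times> D"]) (auto intro: convex_Times simp: closure_Times)
qed

lemma nearly_convex_set_linear_image:
  fixes L :: "'a::euclidean_space \<Rightarrow> 'b::real_normed_vector"
  assumes "linear L" and "nearly_convex_set A"
  shows "nearly_convex_set (L ` A)"
proof -
  obtain C where C: "convex C" "C \<subseteq> A" "A \<subseteq> closure C"
    using assms(2) unfolding nearly_convex_set_def by blast
  have "L ` closure C \<subseteq> closure (L ` C)"
    using assms(1) closure_subset[of "L ` C"]
    by (intro image_closure_subset) (auto simp: linear_conv_bounded_linear linear_continuous_on)
  then show ?thesis unfolding nearly_convex_set_def using C assms(1)
    by (intro exI[of _ "L ` C"]) (auto intro: convex_linear_image)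
qed

lemma fst_epi: "fst ` epi f = edom f"
proof (intro set_eqI iffI)
  fix x assume "x \<in> edom f"
  then obtain s where "f x \<le> ereal s" unfolding edom_def by (cases "f x") auto
  then show "x \<in> fst ` epi f" unfolding epi_def by force
qed (force simp: epi_def edom_def)

section \<open>Non-vertical supporting hyperplanes\<close>

lemma halfspace_avoiding_downward_ray:
  fixes T :: "('a::euclidean_space \<times> real) set"
  assumes "convex T" and "T \<noteq> {}" and ray: "\<And>t. t < c \<Longrightarrow> (0, t) \<notin> T"
  obtains u \<sigma> where "(u, \<sigma>) \<noteq> 0" and "\<sigma> \<ge> 0" and "\<And>z t. (z, t) \<in> T \<Longrightarrow> \<sigma> * c \<le> u \<bullet> z + \<sigma> * t"
proof -
  define S where "S = (\<lambda>t. (0::'a, t)) ` {..<c}"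
  have "convex S" unfolding S_def
    by (rule convex_linear_image) (auto intro: linearI)
  moreover have "S \<noteq> {}" unfolding S_def using lt_ex[of c] by blast
  moreover have "S \<inter> T = {}" unfolding S_def using ray by blast
  ultimately obtain a b where "a \<noteq> 0" and aS: "\<forall>p\<in>S. a \<bullet> p \<le> b" and aT: "\<forall>p\<in>T. b \<le> a \<bullet> p"
    using separating_hyperplane_sets[OF _ assms(1) _ assms(2)] by meson
  obtain u \<sigma> where a: "a = (u, \<sigma>)" by (cases a)
  have below: "\<sigma> * t \<le> b" if "t < c" for t
    using aS that unfolding S_def a by (simp add: inner_Pair)
  have "\<sigma> \<ge> 0"
  proof (rule ccontr)
    assume "\<not> \<sigma> \<ge> 0"
    then have "\<sigma> < 0" by simp
    define t where "t = min (c - 1) (b / \<sigma> - 1)"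
    have "\<sigma> * (b / \<sigma> - 1) \<le> \<sigma> * t"
      unfolding t_def using \<open>\<sigma> < 0\<close> by (intro mult_left_mono_neg) auto
    moreover have "\<sigma> * (b / \<sigma> - 1) = b - \<sigma>" using \<open>\<sigma> < 0\<close> by (simp add: field_simps)
    moreover have "t < c" unfolding t_def by simp
    ultimately show False using below[of t] \<open>\<sigma> < 0\<close> by linarith
  qed
  have "\<sigma> * c \<le> b"
  proof (cases "\<sigma> = 0")
    case True then show ?thesis using below[of "c - 1"] by simp
  next
    case False
    then have "\<sigma> > 0" using \<open>\<sigma> \<ge> 0\<close> by simp
    have "c \<le> b / \<sigma>"
    proof (rule dense_le)
      show "t \<le> b / \<sigma>" if "t < c" for t
        using below[OF that] \<open>\<sigma> > 0\<close> by (simp add: pos_le_divide_eq mult.commute)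
    qed
    then show ?thesis using \<open>\<sigma> > 0\<close> by (simp add: pos_le_divide_eq mult.commute)
  qed
  show thesis
  proof
    show "(u, \<sigma>) \<noteq> 0" using \<open>a \<noteq> 0\<close> a by simp
    show "\<sigma> \<ge> 0" by fact
    show "\<sigma> * c \<le> u \<bullet> z + \<sigma> * t" if "(z, t) \<in> T" for z t
      using aT that \<open>\<sigma> * c \<le> b\<close> unfolding a by (fastforce simp: inner_Pair)
  qed
qed

lemma inner_eq_0_if_bdd_below_on_subspace:
  assumes "subspace V" and "\<And>v. v \<in> V \<Longrightarrow> b \<le> u \<bullet> v" and "v \<in> V"
  shows "u \<bullet> v = 0"
proof (rule ccontr)
  assume "u \<bullet> v \<noteq> 0"
  have "((b - 1) / (u \<bullet> v)) *\<^sub>R v \<in> V" using assms(1,3) by (rule subspace_scale)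
  then have "b \<le> (b - 1) / (u \<bullet> v) * (u \<bullet> v)" using assms(2) by fastforce
  then show False using \<open>u \<bullet> v \<noteq> 0\<close> by simp
qed

text \<open>Adding the orthogonal complement \<open>V\<close> of the projection of \<open>K\<close> before separating
forces the horizontal part \<open>u\<close> of the normal to be orthogonal to \<open>V\<close>.\<close>

lemma nearly_convex_supporting_halfspace:
  fixes K :: "('a::euclidean_space \<times> real) set"
  assumes "nearly_convex_set K" and "K \<noteq> {}" and slice: "\<And>t. (0, t) \<in> K \<Longrightarrow> c \<le> t"
  obtains u \<sigma> where "(u, \<sigma>) \<noteq> 0" and "\<sigma> \<ge> 0"
    and "\<And>v. (\<And>p. p \<in> fst ` K \<Longrightarrow> p \<bullet> v = 0) \<Longrightarrow> u \<bullet> v = 0"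
    and "\<And>z t. (z, t) \<in> K \<Longrightarrow> \<sigma> * c \<le> u \<bullet> z + \<sigma> * t"
proof -
  obtain C where C: "convex C" "C \<subseteq> K" "K \<subseteq> closure C"
    using assms(1) unfolding nearly_convex_set_def by blast
  define V where "V = {v. \<forall>p\<in>fst ` K. p \<bullet> v = 0}"
  have "subspace V" unfolding V_def subspace_def by (auto simp: inner_add_right)
  have "C \<noteq> {}" using C(3) \<open>K \<noteq> {}\<close> by auto
  define T where "T = C + (V \<times> {0})"
  have "convex T" unfolding T_def
    by (intro convex_set_plus C(1) convex_Times subspace_imp_convex \<open>subspace V\<close>) auto
  moreover have "T \<noteq> {}"
    using \<open>C \<noteq> {}\<close> subspace_0[OF \<open>subspace V\<close>] unfolding T_def set_plus_def by fastforce
  moreover have "(0, t) \<notin> T" if "t < c" for t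
  proof
    assume "(0, t) \<in> T"
    then obtain q v where "(q, t) \<in> C" "v \<in> V" "q + v = 0"
      unfolding T_def set_plus_def by auto
    then have "q \<in> fst ` K" "q \<in> V"
      using C(2) subspace_neg[OF \<open>subspace V\<close>] by (force simp: add_eq_0_iff2)+
    then have "q = 0" unfolding V_def by auto
    then show False using slice \<open>(q, t) \<in> C\<close> C(2) \<open>t < c\<close> by force
  qed
  ultimately obtain u \<sigma> where "(u, \<sigma>) \<noteq> 0" and "\<sigma> \<ge> 0"
    and above_T: "\<And>z t. (z, t) \<in> T \<Longrightarrow> \<sigma> * c \<le> u \<bullet> z + \<sigma> * t"
    using halfspace_avoiding_downward_ray by blast
  have above_C: "\<sigma> * c \<le> u \<bullet> z + u \<bullet> v + \<sigma> * t" if "(z, t) \<in> C" "v \<in> V" for z t v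
    using above_T[of "z + v" t] that unfolding T_def set_plus_def
    by (force simp: inner_add_right)
  have u_orth: "u \<bullet> v = 0" if "v \<in> V" for v
  proof -
    obtain z t where "(z, t) \<in> C" using \<open>C \<noteq> {}\<close> by auto
    show ?thesis
      using above_C[OF \<open>(z, t) \<in> C\<close>] \<open>subspace V\<close> that
      by (intro inner_eq_0_if_bdd_below_on_subspace[of V "\<sigma> * c - u \<bullet> z - \<sigma> * t"]) force+
  qed
  have "closure C \<subseteq> {p. \<sigma> * c \<le> u \<bullet> fst p + \<sigma> * snd p}"
    using above_C[where v = 0] subspace_0[OF \<open>subspace V\<close>]
    by (intro closure_minimal closed_Collect_le continuous_intros) auto
  show thesis
  proof (rule that)
    show "(u, \<sigma>) \<noteq> 0" "\<sigma> \<ge> 0" by fact+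
    show "u \<bullet> v = 0" if "\<And>p. p \<in> fst ` K \<Longrightarrow> p \<bullet> v = 0" for v
      using u_orth that unfolding V_def by blast
    show "\<sigma> * c \<le> u \<bullet> z + \<sigma> * t" if "(z, t) \<in> K" for z t
      using \<open>closure C \<subseteq> _\<close> C(3) that by auto
  qed
qed

lemma nearly_convex_nonvertical_support:
  fixes K :: "('a::euclidean_space \<times> real) set"
  assumes "nearly_convex_set K" and "K \<noteq> {}"
    and absorbing: "\<And>z. z \<in> fst ` K \<Longrightarrow> \<exists>e>0. (- e) *\<^sub>R z \<in> fst ` K"
    and slice: "\<And>t. (0, t) \<in> K \<Longrightarrow> c \<le> t"
  obtains v where "\<And>z t. (z, t) \<in> K \<Longrightarrow> v \<bullet> z + c \<le> t"
proof -
  obtain u \<sigma> where nz: "(u, \<sigma>) \<noteq> 0" and "\<sigma> \<ge> 0"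
    and u_orth: "\<And>v. (\<And>p. p \<in> fst ` K \<Longrightarrow> p \<bullet> v = 0) \<Longrightarrow> u \<bullet> v = 0"
    and above_K: "\<And>z t. (z, t) \<in> K \<Longrightarrow> \<sigma> * c \<le> u \<bullet> z + \<sigma> * t"
    using nearly_convex_supporting_halfspace[OF assms(1,2) slice] by blast
  have "\<sigma> > 0"
  proof (rule ccontr)
    assume "\<not> \<sigma> > 0"
    then have "\<sigma> = 0" using \<open>\<sigma> \<ge> 0\<close> by simp
    then have nonneg: "0 \<le> u \<bullet> z" if "z \<in> fst ` K" for z
      using above_K that by force
    have "p \<bullet> u = 0" if p: "p \<in> fst ` K" for p
    proof -
      obtain e where "e > 0" "(- e) *\<^sub>R p \<in> fst ` K" using absorbing p by blast
      then have "u \<bullet> p \<le> 0" using nonneg[of "(- e) *\<^sub>R p"] by (simp add: mult_le_0_iff)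
      then show "p \<bullet> u = 0" using nonneg[OF p] by (simp add: inner_commute)
    qed
    then have "u = 0" using u_orth[of u] by simp
    then show False using nz \<open>\<sigma> = 0\<close> by (simp add: zero_prod_def)
  qed
  show thesis
  proof
    fix z t assume "(z, t) \<in> K"
    then have "\<sigma> * c \<le> u \<bullet> z + \<sigma> * t" by (rule above_K)
    then show "(- (1 / \<sigma>) *\<^sub>R u) \<bullet> z + c \<le> t"
      using \<open>\<sigma> > 0\<close> by (simp add: field_simps)
  qed
qed

section \<open>Coupling two epigraphs\<close>

definition coupled_epi :: "('a::real_inner \<Rightarrow> ereal) \<Rightarrow> ('a \<Rightarrow> ereal) \<Rightarrow> 'a \<Rightarrow> ('a \<times> real) set"
  where "coupled_epi f g w =
    (\<lambda>((x, s), (y, r)). (x - y, s + r - w \<bullet> x)) ` (epi f \<times> epi g)"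

lemma mem_coupled_epi:
  assumes "f x \<le> ereal s" and "g y \<le> ereal r"
  shows "(x - y, s + r - w \<bullet> x) \<in> coupled_epi f g w"
  unfolding coupled_epi_def
  by (rule image_eqI[where x = "((x, s), (y, r))"]) (use assms in \<open>auto simp: epi_def\<close>)

lemma fst_coupled_epi:
  "fst ` coupled_epi f g w = {x - y |x y. x \<in> edom f \<and> y \<in> edom g}"
proof -
  have "fst ` coupled_epi f g w = (\<lambda>(x, y). x - y) ` (fst ` epi f \<times> fst ` epi g)"
    unfolding coupled_epi_def by (force simp: image_image)
  then show ?thesis unfolding fst_epi by auto
qed

lemma nearly_convex_coupled_epi:
  fixes f g :: "'a::euclidean_space \<Rightarrow> ereal"
  assumes "nearly_convex_fun f" and "nearly_convex_fun g"
  shows "nearly_convex_set (coupled_epi f g w)"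
  unfolding coupled_epi_def
proof (rule nearly_convex_set_linear_image)
  show "linear (\<lambda>((x, s), (y, r)). (x - y, s + r - w \<bullet> x))"
    by (rule linearI) (auto simp: algebra_simps inner_add_right)
  show "nearly_convex_set (epi f \<times> epi g)"
    using assms unfolding nearly_convex_fun_def by (rule nearly_convex_set_Times)
qed

lemma fconj_add_ge_coupled_epi:
  assumes "(0, t) \<in> coupled_epi f g w"
  shows "ereal (- t) \<le> fconj (\<lambda>x. f x + g x) w"
proof -
  obtain x s r where "f x \<le> ereal s" "g x \<le> ereal r" "t = s + r - w \<bullet> x"
    using assms unfolding coupled_epi_def epi_def by auto
  moreover from this have "f x + g x \<le> ereal (s + r)"
    using add_mono by fastforce
  ultimately show ?thesis using fconj_ge_epi[of "\<lambda>x. f x + g x" x "s + r" w] by simp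
qed

lemma fconj_add_attained:
  fixes f g :: "'a::euclidean_space \<Rightarrow> ereal"
  assumes "proper_fun f" and "proper_fun g"
    and "nearly_convex_fun f" and "nearly_convex_fun g"
    and x0: "x0 \<in> ri (edom f)" "x0 \<in> ri (edom g)"
    and \<alpha>: "fconj (\<lambda>x. f x + g x) w = ereal \<alpha>"
  obtains w1 w2 where "w = w1 + w2" and "fconj (\<lambda>x. f x + g x) w = fconj f w1 + fconj g w2"
proof -
  let ?K = "coupled_epi f g w"
  have "epi f \<noteq> {}" "epi g \<noteq> {}"
    using x0 fst_epi[of f] fst_epi[of g] unfolding ri_def by auto
  have "nearly_convex_set ?K" using assms(3,4) by (rule nearly_convex_coupled_epi)
  moreover have "?K \<noteq> {}"
    using \<open>epi f \<noteq> {}\<close> \<open>epi g \<noteq> {}\<close> unfolding coupled_epi_def by simp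
  moreover have "\<exists>e>0. (- e) *\<^sub>R z \<in> fst ` ?K" if "z \<in> fst ` ?K" for z
    using ri_inter_diff_absorbing[OF x0] that unfolding fst_coupled_epi by blast
  moreover have "- \<alpha> \<le> t" if "(0, t) \<in> ?K" for t
    using fconj_add_ge_coupled_epi[OF that] \<alpha> by simp
  ultimately obtain v where v: "\<And>z t. (z, t) \<in> ?K \<Longrightarrow> v \<bullet> z + - \<alpha> \<le> t"
    using nearly_convex_nonvertical_support by blast
  have "fconj f (w + v) + fconj g (- v) \<le> ereal \<alpha>"
  proof (rule fconj_add_fconj_le[OF assms(1,2)])
    fix x y a b assume "f x = ereal a" "g y = ereal b"
    then have "v \<bullet> (x - y) + - \<alpha> \<le> a + b - w \<bullet> x"
      using v mem_coupled_epi[of f x a g y b w] by simp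
    then show "(w + v) \<bullet> x - a + (- v) \<bullet> y - b \<le> \<alpha>"
      by (simp add: inner_diff_right inner_add_left)
  qed
  moreover have "fconj (\<lambda>x. f x + g x) w \<le> fconj f (w + v) + fconj g (- v)"
    using assms(1,2) unfolding proper_fun_def by (intro fconj_add_le) auto
  ultimately have "fconj (\<lambda>x. f x + g x) w = fconj f (w + v) + fconj g (- v)"
    using \<alpha> by (auto intro: antisym)
  moreover have "w = (w + v) + - v" by simp
  ultimately show thesis by (rule that[rotated])
qed

theorem theorem6p6:
  fixes f1 f2 :: "'a::euclidean_space \<Rightarrow> ereal"
  assumes "proper_fun f1" and "proper_fun f2"
    and "nearly_convex_fun f1" and "nearly_convex_fun f2"
    and "ri (edom f1) \<inter> ri (edom f2) \<noteq> {}"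
  shows "(\<forall>w. fconj (\<lambda>x. f1 x + f2 x) w = infconv (fconj f1) (fconj f2) w)
    \<and> (\<forall>w. fconj (\<lambda>x. f1 x + f2 x) w \<noteq> \<infinity> \<and> fconj (\<lambda>x. f1 x + f2 x) w \<noteq> -\<infinity> \<longrightarrow>
          (\<exists>w1 w2. w = w1 + w2 \<and>
             fconj (\<lambda>x. f1 x + f2 x) w = fconj f1 w1 + fconj f2 w2))"
proof -
  let ?h = "\<lambda>x. f1 x + f2 x"
  have not_MInf: "\<And>x. f1 x \<noteq> -\<infinity>" "\<And>x. f2 x \<noteq> -\<infinity>"
    using assms(1,2) unfolding proper_fun_def by auto
  obtain x0 where x0: "x0 \<in> ri (edom f1)" "x0 \<in> ri (edom f2)" using assms(5) by blast
  then have "?h x0 < \<infinity>" using not_MInf unfolding ri_def edom_def by auto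
  then have not_MInf_conj: "fconj ?h w \<noteq> -\<infinity>" for w by (rule fconj_neq_MInf)
  have exact: "\<exists>w1 w2. w = w1 + w2 \<and> fconj ?h w = fconj f1 w1 + fconj f2 w2"
    if "fconj ?h w = ereal \<alpha>" for w \<alpha>
    using fconj_add_attained[OF assms(1-4) x0 that] by blast
  have "fconj ?h w = infconv (fconj f1) (fconj f2) w" for w
  proof (cases "fconj ?h w")
    case (real \<alpha>)
    then obtain w1 w2 where "w = w1 + w2" "fconj ?h w = fconj f1 w1 + fconj f2 w2"
      using exact by blast
    then have "infconv (fconj f1) (fconj f2) w \<le> fconj ?h w"
      unfolding infconv_def by (auto intro: INF_lower2)
    then show ?thesis by (rule antisym[OF fconj_add_le_infconv[of f1 f2, OF not_MInf]])
  qed (use fconj_add_le_infconv[of f1 f2 w, OF not_MInf] not_MInf_conj[of w] in auto)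
  moreover have "\<exists>w1 w2. w = w1 + w2 \<and> fconj ?h w = fconj f1 w1 + fconj f2 w2"
    if "fconj ?h w \<noteq> \<infinity> \<and> fconj ?h w \<noteq> -\<infinity>" for w
    using that exact by (cases "fconj ?h w") auto
  ultimately show ?thesis by blast
qed

end
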